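(* Let $\lambda\ge 1/\sqrt{5}$, let $r>0$, $a\in\mathbb{R}$, and let $0<\mu<1/2$ be a constant such that for every $\rho>0$ the spiral $t\mapsto(\rho\cos t,\rho\sin t,\mu\rho t)$, $t\in\mathbb{R}$, is self-expanded. Then there exists a $\lambda$-eel $\gamma:I\to \mathrm{Cyl}(r,[a,a+2\pi\mu r])$ whose length is greater than $1$, whose initial point lies on the top of the cylinder (i.e. has $z$-coordinate $a+2\pi\mu r$) and whose last point lies on the bottom (i.e. has $z$-coordinate $a$).
   Context: $\mathbb{R}^3$ has the Euclidean inner product $\langle\cdot,\cdot\rangle$ and norm $\|\cdot\|$. $\mathrm{Cyl}(r,[a,b])=\{(x,y,z)\in\mathbb{R}^3: x^2+y^2\le r^2,\ a\le z\le b\}$. A curve $\gamma$ on an interval is self-expanded if for all $t_1\le t_2\le t_3$: $\|\gamma(t_1)-\gamma(t_2)\|\le\|\gamma(t_1)-\gamma(t_3)\|$. A $\lambda$-eel is a continuous curve $\gamma:I\to\mathbb{R}^3$ ($I$ an interval) with a nonzero right derivative $\gamma'(\tau)$ at each point such that for all $t<\tau$ in $I$: $\langle\gamma'(\tau),\gamma(t)-\gamma(\tau)\rangle\le\lambda\|\gamma'(\tau)\|\|\gamma(t)-\gamma(\tau)\|$. Length is $\sup\sum\|\gamma(t_i)-\gamma(t_{i+1})\|$ over finite increasing sequences in $I$. *)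

theory Defs
  imports "HOL-Analysis.Analysis"
begin

definition Cyl :: "real \<Rightarrow> real \<Rightarrow> real \<Rightarrow> (real^3) set" where
  "Cyl r a b = {p. (p$1)^2 + (p$2)^2 \<le> r^2 \<and> a \<le> p$3 \<and> p$3 \<le> b}"

definition self_expanded :: "(real \<Rightarrow> real^3) \<Rightarrow> real set \<Rightarrow> bool" where
  "self_expanded \<gamma> I \<longleftrightarrow>
     (\<forall>t1\<in>I. \<forall>t2\<in>I. \<forall>t3\<in>I. t1 \<le> t2 \<and> t2 \<le> t3 \<longrightarrow>
        norm (\<gamma> t1 - \<gamma> t2) \<le> norm (\<gamma> t1 - \<gamma> t3))"

definition eel :: "real \<Rightarrow> (real \<Rightarrow> real^3) \<Rightarrow> real set \<Rightarrow> bool" where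
  "eel lam \<gamma> I \<longleftrightarrow> is_interval I \<and> continuous_on I \<gamma> \<and>
     (\<forall>\<tau>\<in>I. \<exists>v. v \<noteq> 0 \<and> (\<gamma> has_vector_derivative v) (at \<tau> within (I \<inter> {\<tau>..})) \<and>
        (\<forall>t\<in>I. t < \<tau> \<longrightarrow> inner v (\<gamma> t - \<gamma> \<tau>) \<le> lam * norm v * norm (\<gamma> t - \<gamma> \<tau>)))"

definition curve_length :: "(real \<Rightarrow> real^3) \<Rightarrow> real set \<Rightarrow> ereal" where
  "curve_length \<gamma> I = Sup {ereal (\<Sum>i<n. norm (\<gamma> (t i) - \<gamma> (t (Suc i)))) | n t.
       (\<forall>i\<le>n. t i \<in> I) \<and> (\<forall>i<n. t i < t (Suc i))}"

definition spiral :: "real \<Rightarrow> real \<Rightarrow> real \<Rightarrow> real^3" where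
  "spiral \<mu> \<rho> t = vector [\<rho> * cos t, \<rho> * sin t, \<mu> * \<rho> * t]"

end

theory Submission
  imports Defs
begin

(* The eel is a staircase of helices on coaxial cylinders whose radii grow by a large integer
   factor K, joined by radial segments. Each helix makes an integer number of full turns and
   spans the whole height 2 pi mu r of the cylinder, alternately downwards and upwards, so
   n + 1 helices give length at least (n + 1) 2 pi mu r, which exceeds 1 for n large.
   Self-expandedness of the spiral amounts to sin phi + mu^2 phi >= 0 for phi >= 0, which makes
   every chord to an earlier point of a helix obtuse to its tangent; a radial segment moves
   straight away from everything before it; and the earlier pieces, lying in a cylinder thinner
   by the factor K, are seen from the next helix inside the cone of the eel condition as soon
   as lambda >= 1 / sqrt 5 and K is large enough. *)

lemma vector_3_eq_axis:
  "(vector [x, y, z] :: real^3) = x *\<^sub>R axis 1 1 + y *\<^sub>R axis 2 1 + z *\<^sub>R axis 3 1"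
  by (simp add: vec_eq_iff forall_3 axis_def)

lemma inner_vec3: "inner (x :: real^3) y = x$1 * y$1 + x$2 * y$2 + x$3 * y$3"
  by (simp add: inner_vec_def sum_3)

lemma norm_vec3: "norm (x :: real^3) = sqrt ((x$1)^2 + (x$2)^2 + (x$3)^2)"
  by (simp add: norm_eq_sqrt_inner inner_vec3 power2_eq_square)

lemma self_expanded_spiral_sin_bound:
  assumes se: "self_expanded (spiral \<mu> 1) UNIV" and \<phi>: "0 \<le> \<phi>"
  shows "0 \<le> sin \<phi> + \<mu>^2 * \<phi>"
proof (rule ccontr)
  assume neg: "\<not> ?thesis"
  define g where "g t = 2 - 2 * cos t + \<mu>^2 * t^2" for t :: real
  have dist_eq: "norm (spiral \<mu> 1 0 - spiral \<mu> 1 t) = sqrt (g t)" for t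
  proof -
    have "(1 - cos t)^2 + (0 - sin t)^2 + (0 - \<mu> * t)^2 = g t"
      using sin_cos_squared_add[of t] by (simp add: g_def power2_eq_square algebra_simps)
    then show ?thesis by (simp add: norm_vec3 spiral_def)
  qed
  have mono: "g t \<le> g t'" if "0 \<le> t" "t \<le> t'" for t t'
  proof -
    have "norm (spiral \<mu> 1 0 - spiral \<mu> 1 t) \<le> norm (spiral \<mu> 1 0 - spiral \<mu> 1 t')"
      using se that unfolding self_expanded_def by auto
    then show ?thesis unfolding dist_eq by simp
  qed
  have "DERIV g \<phi> :> 2 * (sin \<phi> + \<mu>^2 * \<phi>)"
    unfolding g_def by (auto intro!: derivative_eq_intros simp: algebra_simps)
  moreover have "2 * (sin \<phi> + \<mu>^2 * \<phi>) < 0" using neg by simp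
  ultimately obtain d where "d > 0" "\<And>h. h > 0 \<Longrightarrow> h < d \<Longrightarrow> g (\<phi> + h) < g \<phi>"
    using DERIV_neg_dec_right by blast
  then have "g (\<phi> + d/2) < g \<phi>" by simp
  then show False using mono[of \<phi> "\<phi> + d/2"] \<open>d > 0\<close> \<phi> by simp
qed

definition eel_cone :: "real \<Rightarrow> 'a::real_inner \<Rightarrow> 'a \<Rightarrow> bool" where
  "eel_cone lam v d \<longleftrightarrow> inner v d \<le> lam * norm v * norm d"

lemma eel_cone_if_inner_nonpos: "0 \<le> lam \<Longrightarrow> inner v d \<le> 0 \<Longrightarrow> eel_cone lam v d"
  unfolding eel_cone_def by (smt (verit) mult_nonneg_nonneg norm_ge_zero)

lemma eel_cone_scaleR: "0 < c \<Longrightarrow> eel_cone lam (c *\<^sub>R v) d \<longleftrightarrow> eel_cone lam v d"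
  by (simp add: eel_cone_def mult.assoc mult.left_commute[of c])

text \<open>Unlike \<open>eel\<close>, this fixes the right derivative \<open>v\<close>, which is what makes eels
  concatenable: the eel inequality at a point of the second piece must be checked against the
  first piece with that very \<open>v\<close>.\<close>
definition eel_path ::
    "real \<Rightarrow> (real \<Rightarrow> 'a::real_inner) \<Rightarrow> (real \<Rightarrow> 'a) \<Rightarrow> real \<Rightarrow> real \<Rightarrow> bool" where
  "eel_path lam g v s e \<longleftrightarrow> continuous_on {s..e} g \<and>
     (\<forall>\<tau>\<in>{s..e}. v \<tau> \<noteq> 0 \<and> (g has_vector_derivative v \<tau>) (at \<tau> within {\<tau>..e}) \<and>
        (\<forall>t\<in>{s..<\<tau>}. eel_cone lam (v \<tau>) (g t - g \<tau>)))"

lemma eel_path_imp_eel: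
  assumes "eel_path lam g v s e"
  shows "eel lam g {s..e}"
  unfolding eel_def
proof (intro conjI ballI)
  fix \<tau> assume \<tau>: "\<tau> \<in> {s..e}"
  have "{s..e} \<inter> {\<tau>..} = {\<tau>..e}" using \<tau> by auto
  then show "\<exists>v. v \<noteq> 0 \<and> (g has_vector_derivative v) (at \<tau> within ({s..e} \<inter> {\<tau>..})) \<and>
        (\<forall>t\<in>{s..e}. t < \<tau> \<longrightarrow> inner v (g t - g \<tau>) \<le> lam * norm v * norm (g t - g \<tau>))"
    using assms \<tau> unfolding eel_path_def eel_cone_def by force
qed (use assms in \<open>auto simp: eel_path_def\<close>)

lemma continuous_on_join_Icc:
  fixes g1 g2 :: "real \<Rightarrow> 'a::topological_space"
  assumes "continuous_on {s..m} g1" "continuous_on {m..e} g2" "g1 m = g2 m"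
  shows "continuous_on {s..e} (\<lambda>t. if t \<le> m then g1 t else g2 t)"
proof -
  have "continuous_on {s..e} (\<lambda>t. if id t \<le> m then g1 t else g2 t)"
  proof (rule continuous_on_cases_le)
    show "continuous_on {t \<in> {s..e}. id t \<le> m} g1"
      by (rule continuous_on_subset[OF assms(1)]) auto
    show "continuous_on {t \<in> {s..e}. m \<le> id t} g2"
      by (rule continuous_on_subset[OF assms(2)]) auto
  qed (use assms in \<open>auto simp: continuous_on_id\<close>)
  then show ?thesis by simp
qed

lemma image_join_subset:
  fixes m s e :: "'a::linorder"
  shows "(\<lambda>t. if t \<le> m then f t else g t) ` {s..e} \<subseteq> f ` {s..m} \<union> g ` {m..e}"
proof
  fix y assume "y \<in> (\<lambda>t. if t \<le> m then f t else g t) ` {s..e}"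
  then obtain t where "t \<in> {s..e}" "y = (if t \<le> m then f t else g t)" by blast
  then show "y \<in> f ` {s..m} \<union> g ` {m..e}" by (cases "t \<le> m") auto
qed

lemma eel_path_join:
  assumes P1: "eel_path lam g1 v1 s m" and P2: "eel_path lam g2 v2 m e"
    and eq: "g1 m = g2 m" and "s \<le> m" "m \<le> e"
    and cross: "\<And>\<tau> x. \<tau> \<in> {m..e} \<Longrightarrow> x \<in> g1 ` {s..<m} \<Longrightarrow> eel_cone lam (v2 \<tau>) (x - g2 \<tau>)"
  shows "eel_path lam (\<lambda>t. if t \<le> m then g1 t else g2 t) (\<lambda>t. if t < m then v1 t else v2 t) s e"
  unfolding eel_path_def
proof (intro conjI ballI)
  let ?g = "\<lambda>t. if t \<le> m then g1 t else g2 t"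
  show "continuous_on {s..e} ?g"
    using P1 P2 eq by (intro continuous_on_join_Icc) (auto simp: eel_path_def)
  fix \<tau> assume \<tau>: "\<tau> \<in> {s..e}"
  show "(if \<tau> < m then v1 \<tau> else v2 \<tau>) \<noteq> 0"
    using P1 P2 \<tau> unfolding eel_path_def by auto
  show "(?g has_vector_derivative (if \<tau> < m then v1 \<tau> else v2 \<tau>)) (at \<tau> within {\<tau>..e})"
  proof (cases "\<tau> < m")
    case True
    have "(g1 has_vector_derivative v1 \<tau>) (at \<tau> within {\<tau>..m})"
      using P1 \<tau> True unfolding eel_path_def by auto
    then have "(?g has_vector_derivative v1 \<tau>) (at \<tau> within {\<tau>..m})"
      by (rule has_vector_derivative_transform[rotated 2]) (use True in auto)
    moreover have "at \<tau> within {\<tau>..m} = at \<tau> within {\<tau>..e}"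
      using True \<open>m \<le> e\<close> by (simp add: at_within_Icc_at_right)
    ultimately show ?thesis using True by simp
  next
    case False
    have "(g2 has_vector_derivative v2 \<tau>) (at \<tau> within {\<tau>..e})"
      using P2 \<tau> False unfolding eel_path_def by auto
    then have "(?g has_vector_derivative v2 \<tau>) (at \<tau> within {\<tau>..e})"
      by (rule has_vector_derivative_transform[rotated 2]) (use False \<tau> eq in \<open>auto dest: order_antisym\<close>)
    then show ?thesis using False by simp
  qed
  fix t assume t: "t \<in> {s..<\<tau>}"
  consider "\<tau> < m" | "m \<le> \<tau>" "t < m" | "m \<le> t" by linarith
  then show "eel_cone lam (if \<tau> < m then v1 \<tau> else v2 \<tau>) (?g t - ?g \<tau>)"
  proof cases
    case 1 then show ?thesis using P1 \<tau> t unfolding eel_path_def by auto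
  next
    case 2 then show ?thesis using cross[of \<tau> "g1 t"] \<tau> t eq by auto
  next
    case 3 then show ?thesis using P2 \<tau> t eq unfolding eel_path_def by auto
  qed
qed

lemma eel_path_linear:
  fixes p u :: "'a::real_inner"
  assumes "u \<noteq> 0" "0 \<le> lam"
  shows "eel_path lam (\<lambda>t. p + (t - m) *\<^sub>R u) (\<lambda>_. u) s e"
  unfolding eel_path_def
proof (intro conjI ballI)
  show "continuous_on {s..e} (\<lambda>t. p + (t - m) *\<^sub>R u)"
    by (intro continuous_intros)
  fix \<tau> assume "\<tau> \<in> {s..e}"
  show "((\<lambda>t. p + (t - m) *\<^sub>R u) has_vector_derivative u) (at \<tau> within {\<tau>..e})"
    by (auto intro!: derivative_eq_intros)
  fix t assume "t \<in> {s..<\<tau>}"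
  then have "inner u (p + (t - m) *\<^sub>R u - (p + (\<tau> - m) *\<^sub>R u)) \<le> 0"
    by (simp add: algebra_simps inner_diff_right mult_right_mono)
  then show "eel_cone lam u (p + (t - m) *\<^sub>R u - (p + (\<tau> - m) *\<^sub>R u))"
    using assms(2) by (rule eel_cone_if_inner_nonpos[rotated])
qed (use assms in auto)

text \<open>The spiral of the statement is \<open>helix \<rho> (\<mu> * \<rho>) 0\<close>; the vertical speed \<open>c\<close> may have
  either sign, so a helix can wind downwards.\<close>
definition helix :: "real \<Rightarrow> real \<Rightarrow> real \<Rightarrow> real \<Rightarrow> real^3" where
  "helix R c z0 \<phi> = vector [R * cos \<phi>, R * sin \<phi>, z0 + c * \<phi>]"

definition helix_tangent :: "real \<Rightarrow> real \<Rightarrow> real \<Rightarrow> real^3" where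
  "helix_tangent R c \<phi> = vector [- R * sin \<phi>, R * cos \<phi>, c]"

lemma has_vector_derivative_helix:
  "((\<lambda>t. helix R c z0 (\<Theta> * (t - m))) has_vector_derivative
      \<Theta> *\<^sub>R helix_tangent R c (\<Theta> * (\<tau> - m))) (at \<tau>)"
  unfolding helix_def helix_tangent_def vector_3_eq_axis
  by (auto intro!: derivative_eq_intros simp: algebra_simps)

lemma norm_helix_tangent: "norm (helix_tangent R c \<phi>) = sqrt (R^2 + c^2)"
proof -
  have "(- R * sin \<phi>)^2 + (R * cos \<phi>)^2 = R^2 * ((sin \<phi>)^2 + (cos \<phi>)^2)" by algebra
  then show ?thesis by (simp add: norm_vec3 helix_tangent_def)
qed

lemma helix_horizontal: "(helix R c z0 \<phi> $ 1)^2 + (helix R c z0 \<phi> $ 2)^2 = R^2"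
proof -
  have "(R * cos \<phi>)^2 + (R * sin \<phi>)^2 = R^2 * ((sin \<phi>)^2 + (cos \<phi>)^2)" by algebra
  then show ?thesis by (simp add: helix_def)
qed

lemma helix_in_Cyl:
  assumes "0 \<le> \<phi>" "\<phi> \<le> \<Theta>" "z0 \<in> {a..b}" "z0 + c * \<Theta> \<in> {a..b}"
  shows "helix R c z0 \<phi> \<in> Cyl R a b"
proof -
  have "c * \<phi> \<in> closed_segment 0 (c * \<Theta>)"
  proof (cases "\<Theta> = 0")
    case False
    then have "c * \<phi> = (\<phi> / \<Theta>) * (c * \<Theta>)" "0 \<le> \<phi> / \<Theta>" "\<phi> / \<Theta> \<le> 1"
      using assms(1,2) by auto
    then show ?thesis unfolding closed_segment_def by force
  qed (use assms in auto)
  then have "z0 + c * \<phi> \<in> {a..b}"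
    using assms(3,4) by (auto simp: closed_segment_eq_real_ivl split: if_splits)
  then show ?thesis using helix_horizontal[of R c z0 \<phi>] by (simp add: Cyl_def helix_def)
qed

lemma image_helix_reparam:
  assumes "0 < \<Theta>"
  shows "(\<lambda>t. helix R c z (\<Theta> * (t - m))) ` {m..m + 1} \<subseteq> helix R c z ` {0..\<Theta>}"
proof
  fix y assume "y \<in> (\<lambda>t. helix R c z (\<Theta> * (t - m))) ` {m..m + 1}"
  then obtain t where "t \<in> {m..m + 1}" "y = helix R c z (\<Theta> * (t - m))" by blast
  moreover from this have "\<Theta> * (t - m) \<le> \<Theta> * 1" using assms by (intro mult_left_mono) auto
  ultimately show "y \<in> helix R c z ` {0..\<Theta>}" using assms by auto
qed

lemma inner_helix_tangent_chord:
  assumes sin_bound: "\<And>\<psi>. 0 \<le> \<psi> \<Longrightarrow> 0 \<le> sin \<psi> + \<mu>^2 * \<psi>"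
    and c: "\<bar>c\<bar> = \<mu> * R" and "\<phi>' < \<phi>"
  shows "inner (helix_tangent R c \<phi>) (helix R c z0 \<phi>' - helix R c z0 \<phi>) \<le> 0"
proof -
  have "c^2 = \<mu>^2 * R^2" using c by (metis power2_abs power_mult_distrib)
  then have "inner (helix_tangent R c \<phi>) (helix R c z0 \<phi>' - helix R c z0 \<phi>)
      = - (R^2 * (sin (\<phi> - \<phi>') + \<mu>^2 * (\<phi> - \<phi>')))"
    by (simp add: inner_vec3 helix_def helix_tangent_def sin_diff algebra_simps power2_eq_square)
  moreover have "0 \<le> R^2 * (sin (\<phi> - \<phi>') + \<mu>^2 * (\<phi> - \<phi>'))"
    using sin_bound[of "\<phi> - \<phi>'"] \<open>\<phi>' < \<phi>\<close> by simp
  ultimately show ?thesis by simp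
qed

lemma eel_path_helix:
  assumes sin_bound: "\<And>\<psi>. 0 \<le> \<psi> \<Longrightarrow> 0 \<le> sin \<psi> + \<mu>^2 * \<psi>"
    and c: "\<bar>c\<bar> = \<mu> * R" and "R \<noteq> 0" "0 < \<Theta>" "0 \<le> lam"
  shows "eel_path lam (\<lambda>t. helix R c z0 (\<Theta> * (t - m)))
           (\<lambda>t. \<Theta> *\<^sub>R helix_tangent R c (\<Theta> * (t - m))) s e"
  unfolding eel_path_def
proof (intro conjI ballI)
  show "continuous_on {s..e} (\<lambda>t. helix R c z0 (\<Theta> * (t - m)))"
    by (intro continuous_at_imp_continuous_on ballI
        has_vector_derivative_continuous[OF has_vector_derivative_helix])
  fix \<tau> assume "\<tau> \<in> {s..e}"
  have "norm (helix_tangent R c (\<Theta> * (\<tau> - m))) \<noteq> 0"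
    using \<open>R \<noteq> 0\<close> by (simp add: norm_helix_tangent)
  then show "\<Theta> *\<^sub>R helix_tangent R c (\<Theta> * (\<tau> - m)) \<noteq> 0" using \<open>0 < \<Theta>\<close> by simp
  show "((\<lambda>t. helix R c z0 (\<Theta> * (t - m))) has_vector_derivative
      \<Theta> *\<^sub>R helix_tangent R c (\<Theta> * (\<tau> - m))) (at \<tau> within {\<tau>..e})"
    by (rule has_vector_derivative_at_within[OF has_vector_derivative_helix])
  fix t assume "t \<in> {s..<\<tau>}"
  then have "\<Theta> * (t - m) < \<Theta> * (\<tau> - m)" using \<open>0 < \<Theta>\<close> by simp
  from inner_helix_tangent_chord[OF sin_bound c this]
  show "eel_cone lam (\<Theta> *\<^sub>R helix_tangent R c (\<Theta> * (\<tau> - m)))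
      (helix R c z0 (\<Theta> * (t - m)) - helix R c z0 (\<Theta> * (\<tau> - m)))"
    using \<open>0 < \<Theta>\<close> \<open>0 \<le> lam\<close> by (simp add: eel_cone_scaleR eel_cone_if_inner_nonpos)
qed

lemma inner_helix_tangent_radial:
  assumes sin_bound: "\<And>\<psi>. 0 \<le> \<psi> \<Longrightarrow> 0 \<le> sin \<psi> + \<mu>^2 * \<psi>"
    and c: "\<bar>c\<bar> = \<mu> * R" and x: "x$2 = 0" "x$3 = z0" "0 \<le> x$1" "x$1 \<le> R" and "0 \<le> \<phi>"
  shows "inner (helix_tangent R c \<phi>) (x - helix R c z0 \<phi>) \<le> 0"
proof -
  have "c^2 = \<mu>^2 * R^2" using c by (metis power2_abs power_mult_distrib)
  then have eq: "inner (helix_tangent R c \<phi>) (x - helix R c z0 \<phi>)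
      = - (R * (R - x$1) * (- sin \<phi>) + R^2 * (sin \<phi> + \<mu>^2 * \<phi>))"
    using x by (simp add: inner_vec3 helix_def helix_tangent_def algebra_simps power2_eq_square)
  have "0 \<le> R * (R - x$1) * (- sin \<phi>) + R^2 * (sin \<phi> + \<mu>^2 * \<phi>)" if "sin \<phi> < 0"
  proof (intro add_nonneg_nonneg)
    show "0 \<le> R * (R - x$1) * (- sin \<phi>)" using x that by (intro mult_nonneg_nonneg) auto
    show "0 \<le> R^2 * (sin \<phi> + \<mu>^2 * \<phi>)" using sin_bound[OF \<open>0 \<le> \<phi>\<close>] by simp
  qed
  moreover have "0 \<le> R * x$1 * sin \<phi> + R^2 * \<mu>^2 * \<phi>" if "0 \<le> sin \<phi>"
    using x that \<open>0 \<le> \<phi>\<close> by (intro add_nonneg_nonneg mult_nonneg_nonneg) auto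
  moreover have "R * (R - x$1) * (- sin \<phi>) + R^2 * (sin \<phi> + \<mu>^2 * \<phi>)
      = R * x$1 * sin \<phi> + R^2 * \<mu>^2 * \<phi>"
    by (simp add: algebra_simps power2_eq_square)
  ultimately show ?thesis unfolding eq by linarith
qed

lemma dist_helix_ge:
  assumes x: "(x$1)^2 + (x$2)^2 \<le> \<rho>^2" and "0 \<le> \<rho>" "\<rho> \<le> R"
  shows "R - \<rho> \<le> norm (x - helix R c z0 \<phi>)"
proof -
  define d where "d = x - helix R c z0 \<phi>"
  define q where "q = sqrt ((x$1)^2 + (x$2)^2)"
  define B where "B = cos \<phi> * x$1 + sin \<phi> * x$2"
  have q: "0 \<le> q" "q \<le> \<rho>" "q^2 = (x$1)^2 + (x$2)^2"
    using real_sqrt_le_mono[OF x] \<open>0 \<le> \<rho>\<close> by (auto simp: q_def)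
  have "B^2 \<le> B^2 + (- sin \<phi> * x$1 + cos \<phi> * x$2)^2" by simp
  also have "\<dots> = ((sin \<phi>)^2 + (cos \<phi>)^2) * q^2" unfolding q(3) B_def by algebra
  finally have "B^2 \<le> q^2" by simp
  then have "B \<le> q" using q(1) by (rule power2_le_imp_le)
  have "(d$1)^2 + (d$2)^2 = (x$1 - R * cos \<phi>)^2 + (x$2 - R * sin \<phi>)^2"
    by (simp add: d_def helix_def)
  also have "\<dots> = q^2 - 2 * R * B + R^2 * ((sin \<phi>)^2 + (cos \<phi>)^2)"
    unfolding q(3) B_def by algebra
  also have "\<dots> \<ge> (R - \<rho>)^2"
  proof -
    have "0 \<le> (\<rho> - q) * (2 * R - \<rho> - q)" using q assms by simp
    moreover have "R * B \<le> R * q" using \<open>B \<le> q\<close> assms by (simp add: mult_left_mono)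
    ultimately show ?thesis by (simp add: algebra_simps power2_eq_square)
  qed
  finally have "sqrt ((R - \<rho>)^2) \<le> norm d"
    unfolding norm_vec3 by (intro real_sqrt_le_mono) (simp add: add_increasing2)
  then show ?thesis using assms by (simp add: d_def)
qed

lemma inner_helix_tangent_le:
  assumes x: "(x$1)^2 + (x$2)^2 \<le> \<rho>^2" and "0 \<le> \<rho>" "0 \<le> R"
  shows "inner (helix_tangent R c \<phi>) (x - helix R c z0 \<phi>)
    \<le> R * \<rho> + \<bar>c\<bar> * norm (x - helix R c z0 \<phi>)"
proof -
  define d where "d = x - helix R c z0 \<phi>"
  define A where "A = - sin \<phi> * x$1 + cos \<phi> * x$2"
  have "A^2 \<le> A^2 + (cos \<phi> * x$1 + sin \<phi> * x$2)^2" by simp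
  also have "\<dots> = ((sin \<phi>)^2 + (cos \<phi>)^2) * ((x$1)^2 + (x$2)^2)" unfolding A_def by algebra
  finally have "A^2 \<le> \<rho>^2" using x by simp
  then have "A \<le> \<rho>" using \<open>0 \<le> \<rho>\<close> by (rule power2_le_imp_le)
  then have "R * A \<le> R * \<rho>" using \<open>0 \<le> R\<close> by (rule mult_left_mono)
  have "c * d$3 \<le> \<bar>c\<bar> * \<bar>d$3\<bar>" by (simp add: abs_mult[symmetric])
  also have "\<dots> \<le> \<bar>c\<bar> * norm d" by (simp add: component_le_norm_cart mult_left_mono)
  finally have "c * d$3 \<le> \<bar>c\<bar> * norm d" .
  moreover have "inner (helix_tangent R c \<phi>) d = R * A + c * d$3"
    by (simp add: d_def inner_vec3 helix_def helix_tangent_def A_def algebra_simps)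
  ultimately show ?thesis using \<open>R * A \<le> R * \<rho>\<close> by (simp add: d_def)
qed

text \<open>The constant \<open>1 / sqrt 5\<close> is \<open>(\<mu> + \<delta>) / sqrt (1 + \<mu>^2)\<close>, and \<open>\<delta> > 0\<close> is where
  \<open>\<mu> < 1/2\<close> is needed.\<close>
lemma eel_cone_helix_far:
  assumes x: "(x$1)^2 + (x$2)^2 \<le> \<rho>^2" and "0 \<le> \<rho>"
    and far: "\<rho> * (1 + \<delta>) \<le> \<delta> * R" and \<delta>: "\<delta> = sqrt ((1 + \<mu>^2) / 5) - \<mu>" "0 < \<delta>"
    and lam: "1 / sqrt 5 \<le> lam" and c: "\<bar>c\<bar> = \<mu> * R"
  shows "eel_cone lam (helix_tangent R c \<phi>) (x - helix R c z0 \<phi>)"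
proof -
  define d where "d = x - helix R c z0 \<phi>"
  have \<rho>_le: "\<rho> \<le> \<delta> * (R - \<rho>)" using far by (simp add: algebra_simps)
  then have "0 \<le> \<delta> * (R - \<rho>)" using \<open>0 \<le> \<rho>\<close> by linarith
  then have "\<rho> \<le> R" using \<delta>(2) by (simp add: zero_le_mult_iff)
  then have "0 \<le> R" using \<open>0 \<le> \<rho>\<close> by simp
  have "\<rho> \<le> \<delta> * norm d"
    using \<rho>_le mult_left_mono[OF dist_helix_ge[OF x \<open>0 \<le> \<rho>\<close> \<open>\<rho> \<le> R\<close>, of c z0 \<phi>] less_imp_le[OF \<delta>(2)]]
    by (simp add: d_def)
  have "inner (helix_tangent R c \<phi>) d \<le> R * \<rho> + \<mu> * R * norm d"
    using inner_helix_tangent_le[OF x \<open>0 \<le> \<rho>\<close> \<open>0 \<le> R\<close>, of c \<phi> z0] c by (simp add: d_def)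
  also have "\<dots> \<le> R * (\<mu> + \<delta>) * norm d"
    using mult_left_mono[OF \<open>\<rho> \<le> \<delta> * norm d\<close> \<open>0 \<le> R\<close>] by (simp add: algebra_simps)
  also have "\<mu> + \<delta> = (1 / sqrt 5) * sqrt (1 + \<mu>^2)"
    using \<delta>(1) by (simp add: real_sqrt_divide)
  also have "R * ((1 / sqrt 5) * sqrt (1 + \<mu>^2)) * norm d
      = (1 / sqrt 5) * norm (helix_tangent R c \<phi>) * norm d"
  proof -
    have "R^2 + c^2 = R^2 * (1 + \<mu>^2)" using c by (metis power2_abs power_mult_distrib
        distrib_left mult.commute mult_1)
    then have "norm (helix_tangent R c \<phi>) = R * sqrt (1 + \<mu>^2)"
      using \<open>0 \<le> R\<close> by (simp add: norm_helix_tangent real_sqrt_mult)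
    then show ?thesis by simp
  qed
  also have "\<dots> \<le> lam * norm (helix_tangent R c \<phi>) * norm d"
    using lam by (intro mult_right_mono) auto
  finally show ?thesis by (simp add: eel_cone_def d_def)
qed

lemma eel_path_extend_radially:
  fixes \<gamma> :: "real \<Rightarrow> real^3" and \<rho> R z :: real
  assumes P: "eel_path lam \<gamma> v s M" and "s \<le> M" "0 \<le> lam" "\<rho> < R"
    and inner: "\<forall>x\<in>\<gamma> ` {s..M}. x$1 \<le> \<rho>" and end_pt: "\<gamma> M = vector [\<rho>, 0, z]"
  shows "\<exists>\<gamma>1 v1. eel_path lam \<gamma>1 v1 s (M + 1) \<and> (\<forall>t\<in>{s..M}. \<gamma>1 t = \<gamma> t) \<and>
    \<gamma>1 ` {s..M + 1} \<subseteq> \<gamma> ` {s..M} \<union> (\<lambda>r. vector [r, 0, z]) ` {\<rho>..R} \<and>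
    \<gamma>1 (M + 1) = vector [R, 0, z]"
proof -
  define u :: "real^3" where "u = vector [R - \<rho>, 0, 0]"
  define seg where "seg t = vector [\<rho>, 0, z] + (t - M) *\<^sub>R u" for t
  have seg_eq: "seg t = vector [\<rho> + (t - M) * (R - \<rho>), 0, z]" for t
    by (simp add: seg_def u_def vec_eq_iff forall_3)
  have "u \<noteq> 0" using \<open>\<rho> < R\<close> by (auto simp: u_def vec_eq_iff forall_3)
  then have P_seg: "eel_path lam seg (\<lambda>_. u) M (M + 1)"
    unfolding seg_def using \<open>0 \<le> lam\<close> by (rule eel_path_linear)
  have cross: "eel_cone lam u (x - seg \<tau>)" if "\<tau> \<in> {M..M + 1}" "x \<in> \<gamma> ` {s..<M}"
    for \<tau> and x :: "real^3"
  proof (rule eel_cone_if_inner_nonpos[OF \<open>0 \<le> lam\<close>])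
    have "x$1 \<le> \<rho>" using inner that by auto
    also have "\<rho> \<le> \<rho> + (\<tau> - M) * (R - \<rho>)" using that \<open>\<rho> < R\<close> by simp
    finally have "x$1 \<le> \<rho> + (\<tau> - M) * (R - \<rho>)" .
    then show "inner u (x - seg \<tau>) \<le> 0"
      using \<open>\<rho> < R\<close> by (simp add: inner_vec3 u_def seg_eq mult_nonneg_nonpos)
  qed
  have seg_image: "seg ` {M..M + 1} \<subseteq> (\<lambda>r. vector [r, 0, z]) ` {\<rho>..R}"
  proof
    fix y assume "y \<in> seg ` {M..M + 1}"
    then obtain t where t: "t \<in> {M..M + 1}" "y = seg t" by blast
    then have "(t - M) * (R - \<rho>) \<le> 1 * (R - \<rho>)"
      using \<open>\<rho> < R\<close> by (intro mult_right_mono) auto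
    then have "\<rho> + (t - M) * (R - \<rho>) \<le> R" by simp
    moreover have "\<rho> \<le> \<rho> + (t - M) * (R - \<rho>)" using t \<open>\<rho> < R\<close> by simp
    ultimately have "\<rho> + (t - M) * (R - \<rho>) \<in> {\<rho>..R}" by simp
    then show "y \<in> (\<lambda>r. vector [r, 0, z]) ` {\<rho>..R}" using t(2) by (simp add: seg_eq)
  qed
  let ?\<gamma>1 = "\<lambda>t. if t \<le> M then \<gamma> t else seg t"
  have "eel_path lam ?\<gamma>1 (\<lambda>t. if t < M then v t else u) s (M + 1)"
    by (rule eel_path_join[OF P P_seg _ \<open>s \<le> M\<close> _ cross]) (simp_all add: end_pt seg_eq)
  moreover have "?\<gamma>1 ` {s..M + 1} \<subseteq> \<gamma> ` {s..M} \<union> (\<lambda>r. vector [r, 0, z]) ` {\<rho>..R}"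
    by (rule order_trans[OF image_join_subset]) (use seg_image in blast)
  ultimately show ?thesis by (intro exI[of _ ?\<gamma>1] exI conjI) (auto simp: seg_eq)
qed

lemma eel_path_extend_helix:
  fixes \<gamma> :: "real \<Rightarrow> real^3"
  assumes sin_bound: "\<And>\<psi>. 0 \<le> \<psi> \<Longrightarrow> 0 \<le> sin \<psi> + \<mu>^2 * \<psi>"
    and lam: "1 / sqrt 5 \<le> lam" and \<delta>: "\<delta> = sqrt ((1 + \<mu>^2) / 5) - \<mu>" "0 < \<delta>"
    and far: "\<rho> * (1 + \<delta>) \<le> \<delta> * R" "0 \<le> \<rho>" and c: "\<bar>c\<bar> = \<mu> * R" and "0 < R" "0 < \<Theta>"
    and P: "eel_path lam \<gamma> v s M" and "s \<le> M"
    and visible: "\<gamma> ` {s..M} \<subseteq> Cyl \<rho> a b \<union> (\<lambda>r. vector [r, 0, z]) ` {0..R}"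
    and end_pt: "\<gamma> M = vector [R, 0, z]"
  shows "\<exists>\<gamma>' v'. eel_path lam \<gamma>' v' s (M + 1) \<and> (\<forall>t\<in>{s..M}. \<gamma>' t = \<gamma> t) \<and>
    \<gamma>' ` {s..M + 1} \<subseteq> \<gamma> ` {s..M} \<union> helix R c z ` {0..\<Theta>} \<and> \<gamma>' (M + 1) = helix R c z \<Theta>"
proof -
  define hel where "hel t = helix R c z (\<Theta> * (t - M))" for t
  define w where "w t = \<Theta> *\<^sub>R helix_tangent R c (\<Theta> * (t - M))" for t
  have "0 \<le> lam" by (rule order_trans[OF _ lam]) simp
  have P_hel: "eel_path lam hel w M (M + 1)"
    unfolding hel_def[abs_def] w_def[abs_def] using \<open>0 < R\<close> \<open>0 < \<Theta>\<close> \<open>0 \<le> lam\<close>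
    by (intro eel_path_helix[OF sin_bound c]) auto
  have cross: "eel_cone lam (w \<tau>) (x - hel \<tau>)" if "\<tau> \<in> {M..M + 1}" "x \<in> \<gamma> ` {s..<M}"
    for \<tau> and x :: "real^3"
  proof -
    have "0 \<le> \<Theta> * (\<tau> - M)" using that \<open>0 < \<Theta>\<close> by simp
    have "x \<in> \<gamma> ` {s..M}" using that by auto
    then have "x \<in> Cyl \<rho> a b \<union> (\<lambda>r. vector [r, 0, z]) ` {0..R}" using visible by blast
    then have "eel_cone lam (helix_tangent R c (\<Theta> * (\<tau> - M))) (x - helix R c z (\<Theta> * (\<tau> - M)))"
    proof
      assume "x \<in> Cyl \<rho> a b"
      then show ?thesis using eel_cone_helix_far[OF _ far(2,1) \<delta> lam c] by (simp add: Cyl_def)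
    next
      assume "x \<in> (\<lambda>r. vector [r, 0, z]) ` {0..R}"
      then show ?thesis
        using inner_helix_tangent_radial[OF sin_bound c _ _ _ _ \<open>0 \<le> \<Theta> * (\<tau> - M)\<close>]
          \<open>0 \<le> lam\<close> by (auto intro: eel_cone_if_inner_nonpos)
    qed
    then show ?thesis using \<open>0 < \<Theta>\<close> by (simp add: w_def hel_def eel_cone_scaleR)
  qed
  have hel_image: "hel ` {M..M + 1} \<subseteq> helix R c z ` {0..\<Theta>}"
    unfolding hel_def[abs_def] using \<open>0 < \<Theta>\<close> by (rule image_helix_reparam)
  let ?\<gamma>' = "\<lambda>t. if t \<le> M then \<gamma> t else hel t"
  have "eel_path lam ?\<gamma>' (\<lambda>t. if t < M then v t else w t) s (M + 1)"
    by (rule eel_path_join[OF P P_hel _ \<open>s \<le> M\<close> _ cross])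
      (simp_all add: end_pt hel_def helix_def)
  moreover have "?\<gamma>' ` {s..M + 1} \<subseteq> \<gamma> ` {s..M} \<union> helix R c z ` {0..\<Theta>}"
    by (rule order_trans[OF image_join_subset]) (use hel_image in blast)
  ultimately show ?thesis by (intro exI[of _ ?\<gamma>'] exI conjI) (auto simp: hel_def)
qed

lemma Cyl_mono:
  assumes "0 \<le> \<rho>" "\<rho> \<le> R"
  shows "Cyl \<rho> a b \<subseteq> Cyl R a b"
proof -
  have "\<rho>^2 \<le> R^2" using assms by (rule power_mono[rotated])
  then show ?thesis unfolding Cyl_def by auto
qed

lemma helix_full_turns: "cos \<Theta> = 1 \<Longrightarrow> sin \<Theta> = 0 \<Longrightarrow> helix R c z \<Theta> = vector [R, 0, z + c * \<Theta>]"
  by (simp add: helix_def)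

lemma eel_path_add_stair:
  fixes \<gamma> :: "real \<Rightarrow> real^3"
  assumes sin_bound: "\<And>\<psi>. 0 \<le> \<psi> \<Longrightarrow> 0 \<le> sin \<psi> + \<mu>^2 * \<psi>"
    and lam: "1 / sqrt 5 \<le> lam" and \<delta>: "\<delta> = sqrt ((1 + \<mu>^2) / 5) - \<mu>" "0 < \<delta>"
    and "0 < \<rho>" and far: "\<rho> * (1 + \<delta>) \<le> \<delta> * R" and c: "\<bar>c\<bar> = \<mu> * R"
    and \<Theta>: "0 < \<Theta>" "cos \<Theta> = 1" "sin \<Theta> = 0"
    and P: "eel_path lam \<gamma> v s M" "s \<le> M" and in_Cyl: "\<gamma> ` {s..M} \<subseteq> Cyl \<rho> a b"
    and end_pt: "\<gamma> M = vector [\<rho>, 0, z]" and z: "z \<in> {a..b}" "z + c * \<Theta> \<in> {a..b}"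
  shows "\<exists>\<gamma>' v'. eel_path lam \<gamma>' v' s (M + 2) \<and> (\<forall>t\<in>{s..M}. \<gamma>' t = \<gamma> t) \<and>
    \<gamma>' ` {s..M + 2} \<subseteq> Cyl R a b \<and>
    \<gamma>' (M + 1) = vector [R, 0, z] \<and> \<gamma>' (M + 2) = vector [R, 0, z + c * \<Theta>]"
proof -
  have "\<rho> \<le> \<delta> * (R - \<rho>)" using far by (simp add: algebra_simps)
  then have "0 < \<delta> * (R - \<rho>)" using \<open>0 < \<rho>\<close> by linarith
  then have "\<rho> < R" using \<delta>(2) by (simp add: zero_less_mult_iff)
  have "0 \<le> lam" by (rule order_trans[OF _ lam]) simp
  have "x$1 \<le> \<rho>" if "x \<in> \<gamma> ` {s..M}" for x
  proof -
    have "x \<in> Cyl \<rho> a b" using in_Cyl that by blast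
    then have "(x$1)^2 \<le> \<rho>^2" unfolding Cyl_def by (smt (verit) mem_Collect_eq zero_le_power2)
    then show ?thesis using \<open>0 < \<rho>\<close> by (auto intro: power2_le_imp_le)
  qed
  then obtain \<gamma>1 v1 where P1: "eel_path lam \<gamma>1 v1 s (M + 1)" and same1: "\<forall>t\<in>{s..M}. \<gamma>1 t = \<gamma> t"
    and image1: "\<gamma>1 ` {s..M + 1} \<subseteq> \<gamma> ` {s..M} \<union> (\<lambda>r. vector [r, 0, z]) ` {\<rho>..R}"
    and end1: "\<gamma>1 (M + 1) = vector [R, 0, z]"
    using eel_path_extend_radially[OF P \<open>0 \<le> lam\<close> \<open>\<rho> < R\<close> _ end_pt] by blast
  have "(\<lambda>r. vector [r, 0, z]) ` {\<rho>..R} \<subseteq> (\<lambda>r. vector [r, 0, z]) ` {0..R}"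
    using \<open>0 < \<rho>\<close> by (intro image_mono) auto
  then have visible: "\<gamma>1 ` {s..M + 1} \<subseteq> Cyl \<rho> a b \<union> (\<lambda>r. vector [r, 0, z]) ` {0..R}"
    using image1 in_Cyl by blast
  moreover have "s \<le> M + 1" using \<open>s \<le> M\<close> by simp
  ultimately obtain \<gamma>' v' where P': "eel_path lam \<gamma>' v' s (M + 1 + 1)"
    and same': "\<forall>t\<in>{s..M + 1}. \<gamma>' t = \<gamma>1 t"
    and image': "\<gamma>' ` {s..M + 1 + 1} \<subseteq> \<gamma>1 ` {s..M + 1} \<union> helix R c z ` {0..\<Theta>}"
    and end': "\<gamma>' (M + 1 + 1) = helix R c z \<Theta>"
    using eel_path_extend_helix[OF sin_bound lam \<delta> far less_imp_le[OF \<open>0 < \<rho>\<close>] c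
        order_less_trans[OF \<open>0 < \<rho>\<close> \<open>\<rho> < R\<close>] \<Theta>(1) P1 _ _ end1] by blast
  have "\<gamma> ` {s..M} \<subseteq> Cyl R a b"
    using in_Cyl Cyl_mono[of \<rho> R a b] \<open>0 < \<rho>\<close> \<open>\<rho> < R\<close> by auto
  moreover have "(\<lambda>r. vector [r, 0, z]) ` {\<rho>..R} \<subseteq> Cyl R a b"
    using z \<open>0 < \<rho>\<close> by (auto simp: Cyl_def intro!: power_mono)
  moreover have "helix R c z ` {0..\<Theta>} \<subseteq> Cyl R a b"
    using helix_in_Cyl[OF _ _ z] by auto
  ultimately have "(\<gamma> ` {s..M} \<union> (\<lambda>r. vector [r, 0, z]) ` {\<rho>..R}) \<union> helix R c z ` {0..\<Theta>}
      \<subseteq> Cyl R a b"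
    by (intro Un_least)
  with image' image1 have "\<gamma>' ` {s..M + 1 + 1} \<subseteq> Cyl R a b"
    by (meson Un_mono order_refl order_trans)
  moreover have "\<gamma>' (M + 1) = vector [R, 0, z]" using same' end1 \<open>s \<le> M\<close> by simp
  ultimately show ?thesis
    using P' same' same1 end' helix_full_turns[OF \<Theta>(2,3)] \<open>s \<le> M\<close>
    by (intro exI[of _ \<gamma>'] exI[of _ v']) (simp add: add.assoc)
qed

text \<open>Helix \<open>k\<close> has radius \<open>\<rho> k\<close>, makes the full turns \<open>\<Theta> k\<close> at vertical speed \<open>c k\<close>, and
  leads from level \<open>\<zeta> k\<close> to level \<open>\<zeta> (Suc k)\<close>; it is traversed during \<open>[2k, 2k+1]\<close>, and the
  radial segment to the next helix during \<open>[2k+1, 2k+2]\<close>.\<close>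
lemma eel_path_helix_staircase:
  fixes \<rho> \<Theta> c \<zeta> :: "nat \<Rightarrow> real"
  assumes sin_bound: "\<And>\<psi>. 0 \<le> \<psi> \<Longrightarrow> 0 \<le> sin \<psi> + \<mu>^2 * \<psi>"
    and lam: "1 / sqrt 5 \<le> lam" and \<delta>: "\<delta> = sqrt ((1 + \<mu>^2) / 5) - \<mu>" "0 < \<delta>"
    and \<rho>: "\<And>k. 0 < \<rho> k" "\<And>k. \<rho> k * (1 + \<delta>) \<le> \<delta> * \<rho> (Suc k)"
    and \<Theta>: "\<And>k. k \<le> n \<Longrightarrow> 0 < \<Theta> k \<and> cos (\<Theta> k) = 1 \<and> sin (\<Theta> k) = 0"
    and c: "\<And>k. k \<le> n \<Longrightarrow> \<bar>c k\<bar> = \<mu> * \<rho> k"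
    and \<zeta>: "\<And>k. k \<le> n \<Longrightarrow> \<zeta> (Suc k) = \<zeta> k + c k * \<Theta> k" "\<And>k. k \<le> Suc n \<Longrightarrow> \<zeta> k \<in> {a..b}"
  shows "\<exists>\<gamma> v. eel_path lam \<gamma> v 0 (2 * real n + 1) \<and> \<gamma> ` {0..2 * real n + 1} \<subseteq> Cyl (\<rho> n) a b \<and>
    (\<forall>j\<le>n. \<gamma> (2 * real j) = vector [\<rho> j, 0, \<zeta> j] \<and>
      \<gamma> (2 * real j + 1) = vector [\<rho> j, 0, \<zeta> (Suc j)])"
  using \<Theta> c \<zeta>
proof (induction n)
  case 0
  have "0 \<le> lam" by (rule order_trans[OF _ lam]) simp
  have \<Theta>0: "0 < \<Theta> 0" "cos (\<Theta> 0) = 1" "sin (\<Theta> 0) = 0" using "0.prems"(1)[of 0] by auto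
  have z: "\<zeta> 0 \<in> {a..b}" "\<zeta> 0 + c 0 * \<Theta> 0 \<in> {a..b}"
    using "0.prems"(3)[of 0] "0.prems"(4)[of 0] "0.prems"(4)[of 1] by auto
  define \<gamma> where "\<gamma> t = helix (\<rho> 0) (c 0) (\<zeta> 0) (\<Theta> 0 * (t - 0))" for t
  define w where "w t = \<Theta> 0 *\<^sub>R helix_tangent (\<rho> 0) (c 0) (\<Theta> 0 * (t - 0))" for t
  have "eel_path lam \<gamma> w 0 1"
    unfolding \<gamma>_def[abs_def] w_def[abs_def] using "0.prems"(2)[of 0] \<rho>(1)[of 0] \<Theta>0 \<open>0 \<le> lam\<close>
    by (intro eel_path_helix[OF sin_bound, of _ "\<rho> 0"]) auto
  moreover have "\<gamma> ` {0..1} \<subseteq> helix (\<rho> 0) (c 0) (\<zeta> 0) ` {0..\<Theta> 0}"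
    using image_helix_reparam[OF \<Theta>0(1), of _ _ _ 0] by (simp add: \<gamma>_def[abs_def])
  moreover have "helix (\<rho> 0) (c 0) (\<zeta> 0) ` {0..\<Theta> 0} \<subseteq> Cyl (\<rho> 0) a b"
    using helix_in_Cyl[OF _ _ z] by auto
  moreover have "\<gamma> 0 = vector [\<rho> 0, 0, \<zeta> 0]" "\<gamma> 1 = vector [\<rho> 0, 0, \<zeta> (Suc 0)]"
    using "0.prems"(3)[of 0] helix_full_turns[OF \<Theta>0(2,3)] by (simp_all add: \<gamma>_def helix_def)
  ultimately show ?case by (intro exI[of _ \<gamma>] exI[of _ w]) auto
next
  case (Suc n)
  have "\<And>k. k \<le> n \<Longrightarrow> 0 < \<Theta> k \<and> cos (\<Theta> k) = 1 \<and> sin (\<Theta> k) = 0"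
    "\<And>k. k \<le> n \<Longrightarrow> \<bar>c k\<bar> = \<mu> * \<rho> k" "\<And>k. k \<le> n \<Longrightarrow> \<zeta> (Suc k) = \<zeta> k + c k * \<Theta> k"
    "\<And>k. k \<le> Suc n \<Longrightarrow> \<zeta> k \<in> {a..b}"
    using Suc.prems by simp_all
  from Suc.IH[OF this] obtain \<gamma> v where P: "eel_path lam \<gamma> v 0 (2 * real n + 1)"
    and in_Cyl: "\<gamma> ` {0..2 * real n + 1} \<subseteq> Cyl (\<rho> n) a b"
    and pts: "\<forall>j\<le>n. \<gamma> (2 * real j) = vector [\<rho> j, 0, \<zeta> j] \<and>
      \<gamma> (2 * real j + 1) = vector [\<rho> j, 0, \<zeta> (Suc j)]"
    by blast
  have \<Theta>': "0 < \<Theta> (Suc n)" "cos (\<Theta> (Suc n)) = 1" "sin (\<Theta> (Suc n)) = 0" using Suc.prems(1) by auto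
  have z: "\<zeta> (Suc n) \<in> {a..b}" "\<zeta> (Suc n) + c (Suc n) * \<Theta> (Suc n) \<in> {a..b}"
    using Suc.prems(3,4)[of "Suc n"] Suc.prems(4)[of "Suc (Suc n)"] by auto
  obtain \<gamma>' v' where P': "eel_path lam \<gamma>' v' 0 (2 * real n + 1 + 2)"
    and same: "\<forall>t\<in>{0..2 * real n + 1}. \<gamma>' t = \<gamma> t"
    and in_Cyl': "\<gamma>' ` {0..2 * real n + 1 + 2} \<subseteq> Cyl (\<rho> (Suc n)) a b"
    and pt1: "\<gamma>' (2 * real n + 1 + 1) = vector [\<rho> (Suc n), 0, \<zeta> (Suc n)]"
    and pt2: "\<gamma>' (2 * real n + 1 + 2) = vector [\<rho> (Suc n), 0, \<zeta> (Suc (Suc n))]"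
    using eel_path_add_stair[OF sin_bound lam \<delta> \<rho>(1) \<rho>(2) Suc.prems(2)[of "Suc n"] \<Theta>' P _ in_Cyl
        _ z] pts Suc.prems(3)[of "Suc n"] by auto
  have "\<gamma>' (2 * real j) = vector [\<rho> j, 0, \<zeta> j] \<and> \<gamma>' (2 * real j + 1) = vector [\<rho> j, 0, \<zeta> (Suc j)]"
    if "j \<le> Suc n" for j
  proof (cases "j \<le> n")
    case True
    then show ?thesis using pts same by auto
  next
    case False
    then have "j = Suc n" using that by simp
    then show ?thesis using pt1 pt2 by (simp add: algebra_simps)
  qed
  moreover have "2 * real (Suc n) + 1 = 2 * real n + 1 + 2" by simp
  ultimately show ?case using P' in_Cyl' by (intro exI[of _ \<gamma>'] exI[of _ v']) auto
qed

lemma cone_margin_pos: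
  assumes "0 < \<mu>" "\<mu> < 1/2"
  shows "0 < sqrt ((1 + \<mu>^2) / 5) - \<mu>"
proof -
  have "\<mu> * \<mu> < (1/2) * (1/2)" using assms by (intro mult_strict_mono) auto
  then have "\<mu>^2 < (1 + \<mu>^2) / 5" by (simp add: power2_eq_square)
  then have "sqrt (\<mu>^2) < sqrt ((1 + \<mu>^2) / 5)" by (rule real_sqrt_less_mono)
  then show ?thesis using assms by simp
qed

lemma nat_growth_factor:
  assumes "0 < \<delta>"
  obtains K :: nat where "1 < real K" "1 + \<delta> \<le> \<delta> * real K"
proof
  define K where "K = nat \<lceil>(1 + \<delta>) / \<delta>\<rceil>"
  have "(1 + \<delta>) / \<delta> \<le> real K" unfolding K_def by linarith
  then show "1 + \<delta> \<le> \<delta> * real K" using assms by (simp add: pos_divide_le_eq mult.commute)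
  then have "\<delta> * 1 < \<delta> * real K" by linarith
  then show "1 < real K" using assms by simp
qed

text \<open>Radii grow geometrically by an integer factor \<open>K\<close> from \<open>r / K^n\<close> to \<open>r\<close>, and helix \<open>k\<close>
  makes \<open>K^(n-k)\<close> full turns, so each helix climbs or descends the whole height \<open>2\<pi>\<mu>r\<close>.\<close>
lemma eel_in_Cyl_with_vertical_jumps:
  assumes sin_bound: "\<And>\<psi>. 0 \<le> \<psi> \<Longrightarrow> 0 \<le> sin \<psi> + \<mu>^2 * \<psi>"
    and lam: "1 / sqrt 5 \<le> lam" and \<mu>: "0 < \<mu>" "\<mu> < 1/2" and "0 < r" and "even n"
  defines "H \<equiv> 2 * pi * \<mu> * r"
  shows "\<exists>\<gamma>. eel lam \<gamma> {0..2 * real n + 1} \<and> \<gamma> ` {0..2 * real n + 1} \<subseteq> Cyl r a (a + H) \<and>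
    \<gamma> 0 $ 3 = a + H \<and> \<gamma> (2 * real n + 1) $ 3 = a \<and>
    (\<forall>j\<le>n. H \<le> norm (\<gamma> (2 * real j) - \<gamma> (2 * real j + 1)))"
proof -
  define \<delta> where "\<delta> = sqrt ((1 + \<mu>^2) / 5) - \<mu>"
  have "0 < \<delta>" unfolding \<delta>_def using \<mu> by (rule cone_margin_pos)
  then obtain K :: nat where "1 < real K" "1 + \<delta> \<le> \<delta> * real K" by (rule nat_growth_factor)
  define \<rho> where "\<rho> k = r * real K ^ k / real K ^ n" for k
  define \<Theta> where "\<Theta> k = 2 * real (K ^ (n - k)) * pi" for k
  define c where "c k = (if even k then - \<mu> * \<rho> k else \<mu> * \<rho> k)" for k
  define \<zeta> where "\<zeta> k = (if even k then a + H else a)" for k :: nat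
  have "0 < H" using \<mu> \<open>0 < r\<close> by (simp add: H_def)
  have \<rho>_pos: "0 < \<rho> k" for k using \<open>0 < r\<close> \<open>1 < real K\<close> by (simp add: \<rho>_def)
  have far: "\<rho> k * (1 + \<delta>) \<le> \<delta> * \<rho> (Suc k)" for k
    using mult_left_mono[OF \<open>1 + \<delta> \<le> \<delta> * real K\<close> less_imp_le[OF \<rho>_pos]]
    by (simp add: \<rho>_def field_simps)
  have "\<mu> * \<rho> k * \<Theta> k = H" if "k \<le> n" for k
  proof -
    have "real K ^ k * real K ^ (n - k) = real K ^ n" using that by (simp flip: power_add)
    then show ?thesis using \<open>1 < real K\<close> by (simp add: \<rho>_def \<Theta>_def H_def field_simps)
  qed
  then have \<zeta>_step: "\<zeta> (Suc k) = \<zeta> k + c k * \<Theta> k" if "k \<le> n" for k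
    using that by (simp add: \<zeta>_def c_def algebra_simps)
  have turns: "0 < \<Theta> k \<and> cos (\<Theta> k) = 1 \<and> sin (\<Theta> k) = 0" for k
    using cos_2npi[of "K ^ (n - k)"] sin_2npi[of "K ^ (n - k)"] \<open>1 < real K\<close>
    by (simp add: \<Theta>_def del: of_nat_power)
  have c_abs: "\<bar>c k\<bar> = \<mu> * \<rho> k" for k using \<mu> \<rho>_pos[of k] by (simp add: c_def abs_mult)
  have \<zeta>_range: "\<zeta> k \<in> {a..a + H}" for k using \<open>0 < H\<close> by (simp add: \<zeta>_def)
  have "\<exists>\<gamma> v. eel_path lam \<gamma> v 0 (2 * real n + 1) \<and> \<gamma> ` {0..2 * real n + 1} \<subseteq> Cyl (\<rho> n) a (a + H) \<and>
    (\<forall>j\<le>n. \<gamma> (2 * real j) = vector [\<rho> j, 0, \<zeta> j] \<and>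
      \<gamma> (2 * real j + 1) = vector [\<rho> j, 0, \<zeta> (Suc j)])"
    by (rule eel_path_helix_staircase[where \<mu>=\<mu> and \<rho>=\<rho>, OF sin_bound lam \<delta>_def \<open>0 < \<delta>\<close> \<rho>_pos far])
      (rule turns c_abs \<zeta>_step \<zeta>_range | assumption)+
  then obtain \<gamma> v where P: "eel_path lam \<gamma> v 0 (2 * real n + 1)"
    and in_Cyl: "\<gamma> ` {0..2 * real n + 1} \<subseteq> Cyl (\<rho> n) a (a + H)"
    and pts: "\<forall>j\<le>n. \<gamma> (2 * real j) = vector [\<rho> j, 0, \<zeta> j] \<and>
      \<gamma> (2 * real j + 1) = vector [\<rho> j, 0, \<zeta> (Suc j)]"
    by blast
  have "H \<le> norm (\<gamma> (2 * real j) - \<gamma> (2 * real j + 1))" if "j \<le> n" for j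
  proof -
    have "\<bar>(\<gamma> (2 * real j) - \<gamma> (2 * real j + 1)) $ 3\<bar> = H"
      using pts that \<open>0 < H\<close> by (cases "even j") (simp_all add: \<zeta>_def)
    then show ?thesis using component_le_norm_cart[of "\<gamma> (2 * real j) - \<gamma> (2 * real j + 1)" 3] by simp
  qed
  moreover have "\<rho> n = r" using \<open>1 < real K\<close> by (simp add: \<rho>_def)
  ultimately show ?thesis
    using eel_path_imp_eel[OF P] in_Cyl pts \<open>even n\<close> by (intro exI[of _ \<gamma>]) (auto simp: \<zeta>_def)
qed

lemma curve_length_ge_polygon:
  assumes "\<forall>i\<le>n. t i \<in> I" "\<forall>i<n. t i < t (Suc i)"
  shows "ereal (\<Sum>i<n. norm (\<gamma> (t i) - \<gamma> (t (Suc i)))) \<le> curve_length \<gamma> I"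
  unfolding curve_length_def using assms by (intro Sup_upper) blast

lemma sum_even_le:
  fixes f :: "nat \<Rightarrow> real"
  assumes "\<And>i. 0 \<le> f i"
  shows "(\<Sum>j\<le>N. f (2 * j)) \<le> (\<Sum>i<2 * N + 1. f i)"
proof (induction N)
  case (Suc N)
  have "2 * Suc N + 1 = Suc (Suc (2 * N + 1))" by simp
  then show ?case using Suc assms[of "2 * N + 1"] by simp
qed simp

lemma curve_length_ge_jumps:
  assumes "\<forall>j\<le>n. H \<le> norm (\<gamma> (2 * real j) - \<gamma> (2 * real j + 1))"
  shows "ereal (real (n + 1) * H) \<le> curve_length \<gamma> {0..2 * real n + 1}"
proof -
  define f where "f i = norm (\<gamma> (real i) - \<gamma> (real (Suc i)))" for i
  have "real (n + 1) * H \<le> (\<Sum>j\<le>n. f (2 * j))"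
    using sum_mono[of "{..n}" "\<lambda>_. H" "\<lambda>j. f (2 * j)"] assms by (simp add: f_def add.commute)
  also have "\<dots> \<le> (\<Sum>i<2 * n + 1. f i)" by (rule sum_even_le) (simp add: f_def)
  finally have "ereal (real (n + 1) * H) \<le> ereal (\<Sum>i<2 * n + 1. f i)" by simp
  also have "\<dots> \<le> curve_length \<gamma> {0..2 * real n + 1}"
    unfolding f_def by (rule curve_length_ge_polygon) auto
  finally show ?thesis .
qed

theorem proposition4p8:
  fixes lam r a \<mu> :: real
  assumes "lam \<ge> 1 / sqrt 5" and "r > 0" and "0 < \<mu>" and "\<mu> < 1/2"
    and "\<forall>\<rho>>0. self_expanded (spiral \<mu> \<rho>) UNIV"
  shows "\<exists>(\<gamma> :: real \<Rightarrow> real^3) s e. s \<le> e \<and> eel lam \<gamma> {s..e} \<and>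
           \<gamma> ` {s..e} \<subseteq> Cyl r a (a + 2 * pi * \<mu> * r) \<and>
           curve_length \<gamma> {s..e} > 1 \<and>
           \<gamma> s $ 3 = a + 2 * pi * \<mu> * r \<and> \<gamma> e $ 3 = a"
proof -
  define H where "H = 2 * pi * \<mu> * r"
  have "0 < H" using assms(2,3) by (simp add: H_def)
  define n where "n = 2 * nat \<lceil>1 / H\<rceil>"
  have "1 \<le> real (nat \<lceil>1 / H\<rceil>) * H"
    using real_nat_ceiling_ge[of "1 / H"] by (rule pos_divide_le_eq[OF \<open>0 < H\<close>, THEN iffD1])
  moreover have "real (n + 1) * H = 2 * (real (nat \<lceil>1 / H\<rceil>) * H) + H"
    by (simp add: n_def algebra_simps)
  ultimately have "1 < real (n + 1) * H" using \<open>0 < H\<close> by linarith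
  have "self_expanded (spiral \<mu> 1) UNIV" using assms(5) by simp
  then have "\<exists>\<gamma>. eel lam \<gamma> {0..2 * real n + 1} \<and> \<gamma> ` {0..2 * real n + 1} \<subseteq> Cyl r a (a + H) \<and>
    \<gamma> 0 $ 3 = a + H \<and> \<gamma> (2 * real n + 1) $ 3 = a \<and>
    (\<forall>j\<le>n. H \<le> norm (\<gamma> (2 * real j) - \<gamma> (2 * real j + 1)))"
    unfolding H_def using assms(1-4)
    by (intro eel_in_Cyl_with_vertical_jumps self_expanded_spiral_sin_bound) (auto simp: n_def)
  then obtain \<gamma> where \<gamma>: "eel lam \<gamma> {0..2 * real n + 1}"
    "\<gamma> ` {0..2 * real n + 1} \<subseteq> Cyl r a (a + H)" "\<gamma> 0 $ 3 = a + H" "\<gamma> (2 * real n + 1) $ 3 = a"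
    and jumps: "\<forall>j\<le>n. H \<le> norm (\<gamma> (2 * real j) - \<gamma> (2 * real j + 1))"
    by blast
  have "1 < ereal (real (n + 1) * H)" using \<open>1 < real (n + 1) * H\<close> by simp
  also have "\<dots> \<le> curve_length \<gamma> {0..2 * real n + 1}" using jumps by (rule curve_length_ge_jumps)
  finally have "1 < curve_length \<gamma> {0..2 * real n + 1}" .
  moreover have "0 \<le> 2 * real n + 1" by simp
  ultimately show ?thesis using \<gamma> unfolding H_def by blast
qed

end
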